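(* Let $Y=(Y_{ij})$ be a $3\times 3$ real symmetric positive definite matrix which is Minkowski-reduced. Then for all $n\in\mathbb{R}^3$ we have ${}^t n\, Y\, n \ \ge\ \frac{1}{100}\,Y_{11}\,{}^t n\, n$.
   Context: A real symmetric positive definite $g\times g$ matrix $Y$ is Minkowski-reduced if (a) for all $j=1,\dots,g$ and all $v=(v_1,\dots,v_g)\in\mathbb{Z}^g$ with $\gcd(v_j,\dots,v_g)=1$ one has ${}^t v Y v\ge Y_{jj}$, and (b) for all $j=1,\dots,g-1$ one has $Y_{j,j+1}\ge 0$. *)

theory Defs
  imports "HOL-Analysis.Analysis"
begin

text \<open>A g x g real matrix is represented as Y :: nat \<Rightarrow> nat \<Rightarrow> real, with
  entries Y i j for indices 1 \<le> i, j \<le> g (values outside are irrelevant).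
  Vectors are functions nat \<Rightarrow> _ with indices 1..g.\<close>

definition qform :: "nat \<Rightarrow> (nat \<Rightarrow> nat \<Rightarrow> real) \<Rightarrow> (nat \<Rightarrow> real) \<Rightarrow> real" where
  "qform g Y v = (\<Sum>i=1..g. \<Sum>j=1..g. v i * Y i j * v j)"

definition sym_matrix :: "nat \<Rightarrow> (nat \<Rightarrow> nat \<Rightarrow> real) \<Rightarrow> bool" where
  "sym_matrix g Y \<longleftrightarrow> (\<forall>i\<in>{1..g}. \<forall>j\<in>{1..g}. Y i j = Y j i)"

definition pos_def :: "nat \<Rightarrow> (nat \<Rightarrow> nat \<Rightarrow> real) \<Rightarrow> bool" where
  "pos_def g Y \<longleftrightarrow> (\<forall>v. (\<exists>i\<in>{1..g}. v i \<noteq> 0) \<longrightarrow> qform g Y v > 0)"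

definition minkowski_reduced :: "nat \<Rightarrow> (nat \<Rightarrow> nat \<Rightarrow> real) \<Rightarrow> bool" where
  "minkowski_reduced g Y \<longleftrightarrow>
     sym_matrix g Y \<and> pos_def g Y \<and>
     (\<forall>j\<in>{1..g}. \<forall>v::nat \<Rightarrow> int. Gcd (v ` {j..g}) = 1 \<longrightarrow>
          qform g Y (\<lambda>i. of_int (v i)) \<ge> Y j j) \<and>
     (\<forall>j\<in>{1..g-1}. Y j (j+1) \<ge> 0)"

end

theory Submission
  imports Defs
begin

text \<open>Reduction gives \<open>Y\<^sub>1\<^sub>1 \<le> Y\<^sub>2\<^sub>2 \<le> Y\<^sub>3\<^sub>3\<close>, off-diagonal entries bounded
  by half the smaller diagonal entry, and a lower bound on the sum of the off-diagonal entries
  after any sign change. Flipping the signs of coordinates reduces the claim to vectors with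
  nonnegative entries \<open>x, y, z\<close>; there the form minus \<open>Y\<^sub>1\<^sub>1/2\<close> times the pairwise squared
  differences is bounded below by \<open>Y\<^sub>1\<^sub>1 m\<^sup>2\<close> with \<open>m = min x y z\<close>, and these two quantities
  together dominate \<open>Y\<^sub>1\<^sub>1 (x\<^sup>2 + y\<^sup>2 + z\<^sup>2)/12\<close>.\<close>

lemma sum_sq_le_pairwise_diff_sq_plus_sq:
  fixes x y z m :: real
  assumes "m \<in> {x, y, z}"
  shows "(x^2 + y^2 + z^2) / 12 \<le> ((x - y)^2 + (x - z)^2 + (y - z)^2) / 2 + m^2"
proof -
  have sos: "((u - v)^2 + (u - w)^2 + (v - w)^2) / 2 + u^2 - (u^2 + v^2 + w^2) / 12
      = (v - w)^2 / 2 + 5/12 * (v - 6/5 * u)^2 + 5/12 * (w - 6/5 * u)^2 + 43/60 * u^2"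
    for u v w :: real
    by (simp add: power2_eq_square field_simps)
  have "(u^2 + v^2 + w^2) / 12 \<le> ((u - v)^2 + (u - w)^2 + (v - w)^2) / 2 + u^2" for u v w :: real
  proof -
    have "0 \<le> (v - w)^2 / 2 + 5/12 * (v - 6/5 * u)^2 + 5/12 * (w - 6/5 * u)^2 + 43/60 * u^2"
      by simp
    then show ?thesis
      using sos[of u v w] by linarith
  qed
  from this[of x y z] this[of y x z] this[of z x y] show ?thesis
    using assms by (auto simp: power2_commute algebra_simps)
qed

lemma reduced_ternary_form_ge_nonneg:
  fixes a b c d e f x y z :: real
  assumes "0 \<le> x" "0 \<le> y" "0 \<le> z" "0 \<le> a" "a \<le> b" "b \<le> c"
    and "- a / 2 \<le> d" "- a / 2 \<le> e" "- b / 2 \<le> f" "- (a + b) \<le> 2 * (d + e + f)"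
  shows "a / 100 * (x^2 + y^2 + z^2) \<le> a * x^2 + b * y^2 + c * z^2 + 2 * (d * x * y + e * x * z + f * y * z)"
proof -
  define m where "m = min x (min y z)"
  have m: "0 \<le> m" "m \<le> x" "m \<le> y" "m \<le> z" "m \<in> {x, y, z}"
    using assms(1-3) by (auto simp: m_def min_def)
  have "m^2 \<le> x * y" "m^2 \<le> x * z" "m^2 \<le> y * z"
    using m by (auto simp: power2_eq_square intro: mult_mono)
  \<comment> \<open>the shifted cross coefficients are nonnegative and sum to at least \<open>a/2\<close>\<close>
  then have cross: "a / 2 * m^2 \<le> (d + a/2) * (x * y) + (e + a/2) * (x * z) + (f + b/2) * (y * z)"
    using assms(7-10) mult_right_mono[of "a/2" "d + e + f + a + b/2" "m^2"]
      mult_left_mono[of "m^2" "x * y" "d + a/2"] mult_left_mono[of "m^2" "x * z" "e + a/2"]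
      mult_left_mono[of "m^2" "y * z" "f + b/2"]
    by (simp add: algebra_simps)
  have "a * x^2 + b * y^2 + c * z^2 - a * x * y - a * x * z - b * y * z
      = a/2 * ((x - y)^2 + (x - z)^2 + (y - z)^2)
        + (b - a)/2 * ((y - z)^2 + y^2 + z^2) + (c - b) * z^2"
    by (simp add: power2_eq_square field_simps)
  moreover have "0 \<le> (b - a)/2 * ((y - z)^2 + y^2 + z^2) + (c - b) * z^2"
    using assms(5,6) by simp
  ultimately have diag: "a/2 * ((x - y)^2 + (x - z)^2 + (y - z)^2)
      \<le> a * x^2 + b * y^2 + c * z^2 - a * x * y - a * x * z - b * y * z"
    by linarith
  have "a / 100 * (x^2 + y^2 + z^2) \<le> a * ((x^2 + y^2 + z^2) / 12)"
    using assms(4) by (simp add: field_simps)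
  also have "\<dots> \<le> a * (((x - y)^2 + (x - z)^2 + (y - z)^2) / 2 + m^2)"
    using sum_sq_le_pairwise_diff_sq_plus_sq[OF m(5)] assms(4) by (rule mult_left_mono)
  also have "\<dots> = a/2 * ((x - y)^2 + (x - z)^2 + (y - z)^2) + 2 * (a / 2 * m^2)"
    by (simp add: algebra_simps)
  also have "\<dots> \<le> (a * x^2 + b * y^2 + c * z^2 - a * x * y - a * x * z - b * y * z)
      + 2 * ((d + a/2) * (x * y) + (e + a/2) * (x * z) + (f + b/2) * (y * z))"
    using diag cross by (intro add_mono) auto
  also have "\<dots> = a * x^2 + b * y^2 + c * z^2 + 2 * (d * x * y + e * x * z + f * y * z)"
    by (simp add: algebra_simps)
  finally show ?thesis .
qed

lemma real_sign_decomp: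
  fixes x :: real
  obtains s X where "s \<in> {-1, 1}" "0 \<le> X" "x = s * X"
  using that[of 1 x] that[of "-1" "- x"] by (cases "0 \<le> x") auto

lemma reduced_ternary_form_ge:
  fixes a b c d e f x y z :: real
  assumes "0 \<le> a" "a \<le> b" "b \<le> c" "\<bar>d\<bar> \<le> a / 2" "\<bar>e\<bar> \<le> a / 2" "\<bar>f\<bar> \<le> b / 2"
    and sign_sum: "\<And>\<sigma> \<tau>. \<sigma> \<in> {-1, 1} \<Longrightarrow> \<tau> \<in> {-1, 1} \<Longrightarrow> - (a + b) \<le> 2 * (\<sigma> * d + \<tau> * e + \<sigma> * \<tau> * f)"
  shows "a / 100 * (x^2 + y^2 + z^2) \<le> a * x^2 + b * y^2 + c * z^2 + 2 * (d * x * y + e * x * z + f * y * z)"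
proof -
  obtain sx sy sz X Y Z where s: "sx \<in> {-1, 1}" "sy \<in> {-1, 1}" "sz \<in> {-1, 1}"
    and XYZ: "0 \<le> X" "0 \<le> Y" "0 \<le> Z" and xyz: "x = sx * X" "y = sy * Y" "z = sz * Z"
    by (metis real_sign_decomp)
  \<comment> \<open>with \<open>\<sigma> = sx sy\<close> and \<open>\<tau> = sx sz\<close> the product \<open>\<sigma> \<tau>\<close> is \<open>sy sz\<close>, since \<open>sx\<^sup>2 = 1\<close>\<close>
  have "- (a + b) \<le> 2 * (sx * sy * d + sx * sz * e + sy * sz * f)"
    using sign_sum[of "sx * sy" "sx * sz"] s by auto
  moreover have "- a / 2 \<le> sx * sy * d" "- a / 2 \<le> sx * sz * e" "- b / 2 \<le> sy * sz * f"
    using s assms(4-6) by auto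
  ultimately have bound: "a / 100 * (X^2 + Y^2 + Z^2) \<le> a * X^2 + b * Y^2 + c * Z^2
      + 2 * (sx * sy * d * X * Y + sx * sz * e * X * Z + sy * sz * f * Y * Z)"
    using assms(1-3) XYZ by (intro reduced_ternary_form_ge_nonneg)
  have squares: "x^2 = X^2" "y^2 = Y^2" "z^2 = Z^2"
    using s by (auto simp: xyz power_mult_distrib)
  have products: "d * x * y = sx * sy * d * X * Y" "e * x * z = sx * sz * e * X * Z"
    "f * y * z = sy * sz * f * Y * Z"
    by (simp_all add: xyz mult_ac)
  show ?thesis
    using bound unfolding squares products .
qed

lemma sum_atLeastAtMost_1_3: "(\<Sum>i=1..3::nat. v i) = v 1 + v 2 + (v 3 :: real)"
proof -
  have "{1..3::nat} = {1, 2, 3}"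
    by auto
  then show ?thesis
    by simp
qed

lemma qform_3:
  assumes "sym_matrix 3 Y"
  shows "qform 3 Y v = Y 1 1 * v 1^2 + Y 2 2 * v 2^2 + Y 3 3 * v 3^2
    + 2 * (Y 1 2 * v 1 * v 2 + Y 1 3 * v 1 * v 3 + Y 2 3 * v 2 * v 3)"
proof -
  have "Y 2 1 = Y 1 2" "Y 3 1 = Y 1 3" "Y 3 2 = Y 2 3"
    using assms by (auto simp: sym_matrix_def)
  then show ?thesis
    unfolding qform_def sum_atLeastAtMost_1_3 by (simp add: power2_eq_square algebra_simps)
qed

lemma minkowski_reduced_diag_le_qform:
  assumes "minkowski_reduced g Y" "j \<in> {1..g}" "k \<in> {j..g}" "\<bar>v k\<bar> = 1"
  shows "Y j j \<le> qform g Y (\<lambda>i. of_int (v i))"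
proof -
  have "Gcd (v ` {j..g}) = 1"
    using assms(3,4) by (intro Gcd_eq_1_I[of "v k"]) auto
  with assms(1,2) show ?thesis
    by (auto simp: minkowski_reduced_def)
qed

lemma minkowski_reduced_3_entry_bounds:
  assumes red: "minkowski_reduced 3 Y"
  shows "0 \<le> Y 1 1" "Y 1 1 \<le> Y 2 2" "Y 2 2 \<le> Y 3 3"
    and "\<bar>Y 1 2\<bar> \<le> Y 1 1 / 2" "\<bar>Y 1 3\<bar> \<le> Y 1 1 / 2" "\<bar>Y 2 3\<bar> \<le> Y 2 2 / 2"
    and "\<And>\<sigma> \<tau>. \<sigma> \<in> {-1, 1} \<Longrightarrow> \<tau> \<in> {-1, 1} \<Longrightarrow>
      - (Y 1 1 + Y 2 2) \<le> 2 * (\<sigma> * Y 1 2 + \<tau> * Y 1 3 + \<sigma> * \<tau> * Y 2 3)"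
proof -
  have sym: "sym_matrix 3 Y" and pd: "pos_def 3 Y"
    using red by (auto simp: minkowski_reduced_def)
  define vec :: "int \<Rightarrow> int \<Rightarrow> int \<Rightarrow> nat \<Rightarrow> int"
    where "vec p q r i = (if i = 1 then p else if i = 2 then q else r)" for p q r i
  have test: "Y j j \<le> Y 1 1 * p^2 + Y 2 2 * q^2 + Y 3 3 * r^2
      + 2 * (Y 1 2 * p * q + Y 1 3 * p * r + Y 2 3 * q * r)"
    if "j \<in> {1..3}" "k \<in> {j..3}" "\<bar>vec p q r k\<bar> = 1" for j k p q r
    using minkowski_reduced_diag_le_qform[of 3 Y j k "vec p q r"] red that
    by (simp add: qform_3[OF sym] vec_def)
  have "0 < qform 3 Y (\<lambda>i. if i = 1 then 1 else 0)"
    using pd unfolding pos_def_def by force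
  then show "0 \<le> Y 1 1"
    by (simp add: qform_3[OF sym])
  show "Y 1 1 \<le> Y 2 2"
    using test[of 1 2 0 1 0] by (simp add: vec_def)
  show "Y 2 2 \<le> Y 3 3"
    using test[of 2 3 0 0 1] by (simp add: vec_def)
  show "\<bar>Y 1 2\<bar> \<le> Y 1 1 / 2"
    using test[of 2 2 1 1 0] test[of 2 2 1 "-1" 0] by (simp add: vec_def)
  show "\<bar>Y 1 3\<bar> \<le> Y 1 1 / 2"
    using test[of 3 3 1 0 1] test[of 3 3 1 0 "-1"] by (simp add: vec_def)
  show "\<bar>Y 2 3\<bar> \<le> Y 2 2 / 2"
    using test[of 3 3 0 1 1] test[of 3 3 0 1 "-1"] by (simp add: vec_def)
  fix \<sigma> \<tau> :: real
  assume "\<sigma> \<in> {-1, 1}" "\<tau> \<in> {-1, 1}"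
  then show "- (Y 1 1 + Y 2 2) \<le> 2 * (\<sigma> * Y 1 2 + \<tau> * Y 1 3 + \<sigma> * \<tau> * Y 2 3)"
    using test[of 3 3 1 1 1] test[of 3 3 1 1 "-1"] test[of 3 3 1 "-1" 1] test[of 3 3 1 "-1" "-1"]
    by (auto simp: vec_def)
qed

theorem lemma2p2:
  fixes Y :: "nat \<Rightarrow> nat \<Rightarrow> real"
  assumes "sym_matrix 3 Y" and "pos_def 3 Y" and "minkowski_reduced 3 Y"
  shows "\<forall>n::nat \<Rightarrow> real. qform 3 Y n \<ge> (1/100) * Y 1 1 * (\<Sum>i=1..3. n i * n i)"
proof
  fix n :: "nat \<Rightarrow> real"
  have "Y 1 1 / 100 * (n 1^2 + n 2^2 + n 3^2) \<le> qform 3 Y n"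
    unfolding qform_3[OF assms(1)]
    by (rule reduced_ternary_form_ge) (use minkowski_reduced_3_entry_bounds[OF assms(3)] in auto)
  then show "qform 3 Y n \<ge> (1/100) * Y 1 1 * (\<Sum>i=1..3. n i * n i)"
    unfolding sum_atLeastAtMost_1_3 by (simp add: power2_eq_square)
qed

end
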